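(* Let $A$ be a Noetherian ring, $X=\mathrm{Spec}(A)$, $I=(f_1,\dots,f_n)\subseteq A$, $Z=V(I)$, $U=X\setminus Z$, $\widehat{A}$ the $I$-adic completion, $\mathfrak{X}=\mathrm{Spf}(\widehat{A})$ and $\mathfrak{X}^{\mathrm{ad}}=\mathrm{Spa}(\widehat{A},\widehat{A})$. Let $\sigma\colon\mathfrak{X}^{\mathrm{ad}}\to X$ send a continuous valuation $\nu$ to the prime $\{a\in A:\nu(a)=0\}$, let $U_i=D(f_i)$, $W_i=\sigma^{-1}(U_i)$ and $W=\sigma^{-1}(U)$. For a multi-index $\alpha\in\mathbb{Z}_{\ge0}^n$ put $f^{\alpha}=\prod_j f_j^{\alpha_j}$, and for $k\ge 0$ let \[ W_{i,k}=R_{\mathfrak{X}^{\mathrm{ad}}}\Big(\frac{\{f_i\}\cup\{f^{\alpha}\}_{|\alpha|=k,\ \alpha_i=0}}{f_i}\Big). \] Then $W_i=\bigcup_k W_{i,k}$ for each $i$; in particular \[ W=\bigcup_{i\le n}W_i=\bigcup_{i\le n}\bigcup_k W_{i,k}. \]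
   Context: For a finite subset $T\subseteq\widehat{A}$ generating an open ideal and $s\in\widehat{A}$, the rational subset is $R_{\mathfrak{X}^{\mathrm{ad}}}(T/s)=\{\nu\in\mathrm{Spa}(\widehat{A},\widehat{A}):\nu(t)\le\nu(s)\ \forall t\in T,\ \nu(s)\neq0\}$; here $|\alpha|=\sum_j\alpha_j$. The map $\sigma$ is the composite of the adification of $\mathfrak{X}\to X$ with the support morphism $\mathrm{Spa}(A,A)\to\mathrm{Spec}(A)$. *)

theory Defs
  imports "HOL-Algebra.Ring_Divisibility" "HOL-Algebra.Ideal_Product" "HOL-Algebra.QuotRing"
begin

text \<open>n-th power of an ideal, computed in the monoid of ideals (I^0 = A).\<close>
definition ideal_pow :: "('a, 'b) ring_scheme \<Rightarrow> 'a set \<Rightarrow> nat \<Rightarrow> 'a set" where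
  "ideal_pow R I n = I [^]\<^bsub>ideals_set R\<^esub> n"

text \<open>The I-adic completion as the inverse limit of the rings A / I^n: compatible
  sequences of cosets x n of I^n.\<close>
definition adic_completion :: "('a, 'b) ring_scheme \<Rightarrow> 'a set \<Rightarrow> (nat \<Rightarrow> 'a set) ring" where
  "adic_completion R I =
    \<lparr> carrier = {x. (\<forall>n. x n \<in> carrier (R Quot ideal_pow R I n)) \<and> (\<forall>n. x (Suc n) \<subseteq> x n)},
      mult = (\<lambda>x y n. x n \<otimes>\<^bsub>R Quot ideal_pow R I n\<^esub> y n),
      one = (\<lambda>n. \<one>\<^bsub>R Quot ideal_pow R I n\<^esub>),
      zero = (\<lambda>n. \<zero>\<^bsub>R Quot ideal_pow R I n\<^esub>),
      add = (\<lambda>x y n. x n \<oplus>\<^bsub>R Quot ideal_pow R I n\<^esub> y n) \<rparr>"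

definition compl_map :: "('a, 'b) ring_scheme \<Rightarrow> 'a set \<Rightarrow> 'a \<Rightarrow> (nat \<Rightarrow> 'a set)" where
  "compl_map R I a = (\<lambda>n. ideal_pow R I n +>\<^bsub>R\<^esub> a)"

text \<open>Open sets of the (inverse limit = I-adic) topology on the completion: a subset S
  is open iff every x in S has a neighbourhood x + ker(completion \<rightarrow> A/I^n) inside S.\<close>
definition compl_open :: "('a, 'b) ring_scheme \<Rightarrow> 'a set \<Rightarrow> (nat \<Rightarrow> 'a set) set \<Rightarrow> bool" where
  "compl_open R I S \<longleftrightarrow> S \<subseteq> carrier (adic_completion R I) \<and>
     (\<forall>x\<in>S. \<exists>n. \<forall>y\<in>carrier (adic_completion R I). y n = x n \<longrightarrow> y \<in> S)"

text \<open>Values in \<Gamma> \<union> {0} for a totally ordered abelian group \<Gamma> (written additively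
  in the type 'g); None is the element 0, Some g the group element g; Some 0 is 1.\<close>
fun vmult :: "'g::linordered_ab_group_add option \<Rightarrow> 'g option \<Rightarrow> 'g option" where
  "vmult (Some a) (Some b) = Some (a + b)"
| "vmult _ _ = None"

fun vle :: "'g::linordered_ab_group_add option \<Rightarrow> 'g option \<Rightarrow> bool" where
  "vle None _ = True"
| "vle (Some a) None = False"
| "vle (Some a) (Some b) = (a \<le> b)"

definition vlt :: "'g::linordered_ab_group_add option \<Rightarrow> 'g option \<Rightarrow> bool" where
  "vlt x y \<longleftrightarrow> vle x y \<and> x \<noteq> y"

definition valuation :: "('r, 'b) ring_scheme \<Rightarrow> ('r \<Rightarrow> 'g::linordered_ab_group_add option) \<Rightarrow> bool" where
  "valuation S v \<longleftrightarrow>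
     (\<forall>a\<in>carrier S. \<forall>b\<in>carrier S. v (a \<otimes>\<^bsub>S\<^esub> b) = vmult (v a) (v b)) \<and>
     (\<forall>a\<in>carrier S. \<forall>b\<in>carrier S. vle (v (a \<oplus>\<^bsub>S\<^esub> b)) (v a) \<or> vle (v (a \<oplus>\<^bsub>S\<^esub> b)) (v b)) \<and>
     v \<zero>\<^bsub>S\<^esub> = None \<and> v \<one>\<^bsub>S\<^esub> = Some 0"

definition value_group :: "('r, 'b) ring_scheme \<Rightarrow> ('r \<Rightarrow> 'g::linordered_ab_group_add option) \<Rightarrow> 'g set" where
  "value_group S v = \<Inter>{H. 0 \<in> H \<and> (\<forall>x\<in>H. \<forall>y\<in>H. x + y \<in> H) \<and> (\<forall>x\<in>H. - x \<in> H) \<and>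
                              {g. \<exists>a\<in>carrier S. v a = Some g} \<subseteq> H}"

text \<open>Points of Spa(A^, A^) (represented by valuations): continuous valuations with
  v(a) \<le> 1 on A^.\<close>
definition spa_point :: "('a, 'b) ring_scheme \<Rightarrow> 'a set \<Rightarrow> ((nat \<Rightarrow> 'a set) \<Rightarrow> 'g::linordered_ab_group_add option) \<Rightarrow> bool" where
  "spa_point R I v \<longleftrightarrow> valuation (adic_completion R I) v \<and>
     (\<forall>\<gamma>\<in>value_group (adic_completion R I) v.
        compl_open R I {a\<in>carrier (adic_completion R I). vlt (v a) (Some \<gamma>)}) \<and>
     (\<forall>a\<in>carrier (adic_completion R I). vle (v a) (Some 0))"

definition Spa :: "('a, 'b) ring_scheme \<Rightarrow> 'a set \<Rightarrow> ((nat \<Rightarrow> 'a set) \<Rightarrow> 'g::linordered_ab_group_add option) set" where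
  "Spa R I = {v. spa_point R I v}"

definition rational_subset :: "('a, 'b) ring_scheme \<Rightarrow> 'a set \<Rightarrow> (nat \<Rightarrow> 'a set) set \<Rightarrow> (nat \<Rightarrow> 'a set)
    \<Rightarrow> ((nat \<Rightarrow> 'a set) \<Rightarrow> 'g::linordered_ab_group_add option) set" where
  "rational_subset R I T s = {v\<in>Spa R I. (\<forall>t\<in>T. vle (v t) (v s)) \<and> v s \<noteq> None}"

definition sigma :: "('a, 'b) ring_scheme \<Rightarrow> 'a set \<Rightarrow> ((nat \<Rightarrow> 'a set) \<Rightarrow> 'g::linordered_ab_group_add option) \<Rightarrow> 'a set" where
  "sigma R I v = {a\<in>carrier R. v (compl_map R I a) = None}"

definition Spec :: "('a, 'b) ring_scheme \<Rightarrow> 'a set set" where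
  "Spec R = {P. primeideal P R}"

definition basic_open :: "('a, 'b) ring_scheme \<Rightarrow> 'a \<Rightarrow> 'a set set" where
  "basic_open R g = {P\<in>Spec R. g \<notin> P}"

definition compl_V :: "('a, 'b) ring_scheme \<Rightarrow> 'a set \<Rightarrow> 'a set set" where
  "compl_V R I = {P\<in>Spec R. \<not> I \<subseteq> P}"

definition preimage_sigma :: "('a, 'b) ring_scheme \<Rightarrow> 'a set \<Rightarrow> 'a set set
    \<Rightarrow> ((nat \<Rightarrow> 'a set) \<Rightarrow> 'g::linordered_ab_group_add option) set" where
  "preimage_sigma R I Y = {v\<in>Spa R I. sigma R I v \<in> Y}"

definition monomial :: "('a, 'b) ring_scheme \<Rightarrow> (nat \<Rightarrow> 'a) \<Rightarrow> nat \<Rightarrow> (nat \<Rightarrow> nat) \<Rightarrow> 'a" where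
  "monomial R f n \<alpha> = finprod R (\<lambda>j. f j [^]\<^bsub>R\<^esub> \<alpha> j) {..<n}"

definition multi_idx :: "nat \<Rightarrow> nat \<Rightarrow> nat \<Rightarrow> (nat \<Rightarrow> nat) set" where
  "multi_idx n i k = {\<alpha>. (\<forall>j\<ge>n. \<alpha> j = 0) \<and> (\<Sum>j<n. \<alpha> j) = k \<and> \<alpha> i = 0}"

definition W_ik :: "('a, 'b) ring_scheme \<Rightarrow> 'a set \<Rightarrow> (nat \<Rightarrow> 'a) \<Rightarrow> nat \<Rightarrow> nat \<Rightarrow> nat
    \<Rightarrow> ((nat \<Rightarrow> 'a set) \<Rightarrow> 'g::linordered_ab_group_add option) set" where
  "W_ik R I f n i k = rational_subset R I
     (insert (compl_map R I (f i)) {compl_map R I (monomial R f n \<alpha>) | \<alpha>. \<alpha> \<in> multi_idx n i k})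
     (compl_map R I (f i))"

end

theory Submission
  imports Defs
begin

(* A point v of Spa(A^, A^) lies in W_i exactly when v(f_i) \<noteq> 0. Continuity of v makes
   {a. v(a) < v(f_i)} an open neighbourhood of 0 in the I-adic topology, so it contains
   the image of I^k for some k; every monomial f^\<alpha> with |\<alpha>| = k lies in I^k, hence
   v(f^\<alpha>) < v(f_i) and v \<in> W_{i,k}. The equality W = \<Union>_i W_i holds already on Spec A,
   since a prime ideal contains I iff it contains every f_i. *)

lemma vle_refl: "vle x x"
  by (cases x) auto

lemma vle_None_iff: "vle x None \<longleftrightarrow> x = None"
  by (cases x) auto

lemma vmult_eq_None_iff: "vmult x y = None \<longleftrightarrow> x = None \<or> y = None"
  by (cases x; cases y) auto

context cring
begin

lemma ideal_pow_0 [simp]: "ideal_pow R I 0 = carrier R"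
  by (simp add: ideal_pow_def ideals_set_def)

lemma ideal_pow_Suc: "ideal_pow R I (Suc k) = ideal_pow R I k \<cdot> I"
  by (simp add: ideal_pow_def ideals_set_def)

lemma ideal_pow_ideal: "ideal I R \<Longrightarrow> ideal (ideal_pow R I k) R"
  by (induction k) (simp_all add: oneideal ideal_pow_Suc ideal_prod_is_ideal)

lemma ideal_pow_add:
  assumes "ideal I R"
  shows "ideal_pow R I (a + b) = ideal_pow R I a \<cdot> ideal_pow R I b"
proof (induction b)
  case 0
  then show ?case
    using ideal_prod_one[OF ideal_pow_ideal[OF assms]] by simp
next
  case (Suc b)
  then show ?case
    by (simp add: ideal_pow_Suc ideal_prod_assoc ideal_pow_ideal assms)
qed

lemma ideal_pow_Suc_subset: "ideal I R \<Longrightarrow> ideal_pow R I (Suc k) \<subseteq> ideal_pow R I k"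
  using ideal_prod_inter[OF ideal_pow_ideal] by (simp add: ideal_pow_Suc)

lemma nat_pow_mem_ideal_pow:
  assumes "ideal I R" and "x \<in> I"
  shows "x [^] k \<in> ideal_pow R I k"
proof (induction k)
  case 0
  then show ?case using ideal.Icarr[OF assms] by simp
next
  case (Suc k)
  then show ?case
    using ideal_prod.prod[OF Suc.IH assms(2)] by (simp add: ideal_pow_Suc)
qed

lemma monomial_mem_ideal_pow:
  assumes I: "ideal I R" and f: "f ` {..<n} \<subseteq> I"
  shows "monomial R f n \<alpha> \<in> ideal_pow R I (\<Sum>j<n. \<alpha> j)"
  using f
proof (induction n)
  case 0
  then show ?case by (simp add: monomial_def)
next
  case (Suc n)
  have carr: "f j \<in> carrier R" if "j < Suc n" for j
    using that Suc.prems ideal.Icarr[OF I] by auto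
  have "monomial R f (Suc n) \<alpha> = f n [^] \<alpha> n \<otimes> monomial R f n \<alpha>"
    unfolding monomial_def lessThan_Suc using carr
    by (subst finprod_insert) (auto simp del: finprod_insert)
  moreover have "f n [^] \<alpha> n \<otimes> monomial R f n \<alpha>
      \<in> ideal_pow R I (\<alpha> n) \<cdot> ideal_pow R I (\<Sum>j<n. \<alpha> j)"
    using Suc.prems Suc.IH nat_pow_mem_ideal_pow[OF I]
    by (intro ideal_prod.prod) (auto simp: lessThan_Suc)
  ultimately show ?case
    by (simp add: ideal_pow_add[OF I] add.commute)
qed

lemma compl_map_ring_hom:
  assumes I: "ideal I R"
  shows "compl_map R I \<in> ring_hom R (adic_completion R I)"
proof (rule ring_hom_memI)
  fix a assume a: "a \<in> carrier R"
  have "compl_map R I a k \<in> carrier (R Quot ideal_pow R I k)" for k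
    using ring_hom_closed[OF ideal.rcos_ring_hom[OF ideal_pow_ideal[OF I]] a]
    by (simp add: compl_map_def)
  moreover have "compl_map R I a (Suc k) \<subseteq> compl_map R I a k" for k
    using ideal_pow_Suc_subset[OF I]
    by (auto simp: compl_map_def a_r_coset_def r_coset_def)
  ultimately show "compl_map R I a \<in> carrier (adic_completion R I)"
    by (simp add: adic_completion_def)
next
  fix a b assume "a \<in> carrier R" "b \<in> carrier R"
  then show "compl_map R I (a \<otimes> b) = compl_map R I a \<otimes>\<^bsub>adic_completion R I\<^esub> compl_map R I b"
    and "compl_map R I (a \<oplus> b) = compl_map R I a \<oplus>\<^bsub>adic_completion R I\<^esub> compl_map R I b"
    using ideal.rcoset_mult_add[OF ideal_pow_ideal[OF I]] ideal.a_rcos_sum[OF ideal_pow_ideal[OF I]]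
    by (auto simp: compl_map_def adic_completion_def FactRing_def)
qed (auto simp: compl_map_def adic_completion_def FactRing_def)

lemma compl_map_mod_ideal_pow:
  assumes "ideal I R" and "a \<in> ideal_pow R I k"
  shows "compl_map R I a k = \<zero>\<^bsub>adic_completion R I\<^esub> k"
  using a_rcos_zero[OF ideal_pow_ideal] assms
  by (simp add: compl_map_def adic_completion_def FactRing_def)

lemma compl_map_zero: "ideal I R \<Longrightarrow> compl_map R I \<zero> = \<zero>\<^bsub>adic_completion R I\<^esub>"
  using compl_map_mod_ideal_pow[OF _ additive_subgroup.zero_closed[OF ideal.axioms(1)[OF ideal_pow_ideal]]]
  by blast

lemma valuation_comap_primeideal:
  assumes h: "h \<in> ring_hom R S" "h \<zero> = \<zero>\<^bsub>S\<^esub>" and v: "valuation S v"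
  shows "primeideal {a \<in> carrier R. v (h a) = None} R"
proof -
  let ?P = "{a \<in> carrier R. v (h a) = None}"
  have mult: "v (h (a \<otimes> b)) = vmult (v (h a)) (v (h b))"
    if "a \<in> carrier R" "b \<in> carrier R" for a b
    using that v ring_hom_mult[OF h(1)] ring_hom_closed[OF h(1)] by (simp add: valuation_def)
  have add: "vle (v (h (a \<oplus> b))) (v (h a)) \<or> vle (v (h (a \<oplus> b))) (v (h b))"
    if "a \<in> carrier R" "b \<in> carrier R" for a b
    using that v ring_hom_add[OF h(1)] ring_hom_closed[OF h(1)] by (simp add: valuation_def)
  have "subgroup ?P (add_monoid R)"
  proof
    show "?P \<subseteq> carrier (add_monoid R)" by auto
    show "\<one>\<^bsub>add_monoid R\<^esub> \<in> ?P" using h(2) v by (simp add: valuation_def)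
  next
    fix a b assume "a \<in> ?P" "b \<in> ?P"
    then show "a \<otimes>\<^bsub>add_monoid R\<^esub> b \<in> ?P"
      using add[of a b] by (auto simp: vle_None_iff)
  next
    fix a assume a: "a \<in> ?P"
    then have "\<ominus> a = \<ominus> \<one> \<otimes> a" by (simp add: l_minus)
    then show "inv\<^bsub>add_monoid R\<^esub> a \<in> ?P"
      using a mult[of "\<ominus> \<one>" a] by (simp add: vmult_eq_None_iff a_inv_def[symmetric])
  qed
  then show ?thesis
  proof (intro primeidealI2 additive_subgroupI is_cring)
    fix a x assume "a \<in> ?P" "x \<in> carrier R"
    then show "x \<otimes> a \<in> ?P" "a \<otimes> x \<in> ?P"
      using mult[of x a] mult[of a x] by (auto simp: vmult_eq_None_iff)
  next
    have "\<one> \<notin> ?P" using ring_hom_one[OF h(1)] v by (simp add: valuation_def)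
    then show "carrier R \<noteq> ?P" by blast
  next
    fix a b assume "a \<in> carrier R" "b \<in> carrier R" "a \<otimes> b \<in> ?P"
    then show "a \<in> ?P \<or> b \<in> ?P" using mult[of a b] by (simp add: vmult_eq_None_iff)
  qed
qed

lemma sigma_mem_Spec:
  assumes "ideal I R" and "v \<in> Spa R I"
  shows "sigma R I v \<in> Spec R"
  using valuation_comap_primeideal[OF compl_map_ring_hom compl_map_zero] assms
  by (auto simp: sigma_def Spec_def Spa_def spa_point_def)

lemma preimage_sigma_basic_open:
  assumes "ideal I R" and "a \<in> carrier R"
  shows "preimage_sigma R I (basic_open R a) = {v \<in> Spa R I. v (compl_map R I a) \<noteq> None}"
  using sigma_mem_Spec[OF assms(1)] assms(2)
  by (auto simp: preimage_sigma_def basic_open_def sigma_def)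

lemma compl_V_genideal:
  assumes "S \<subseteq> carrier R"
  shows "compl_V R (Idl S) = (\<Union>s\<in>S. basic_open R s)"
proof -
  have "\<not> Idl S \<subseteq> P \<longleftrightarrow> (\<exists>s\<in>S. s \<notin> P)" if "P \<in> Spec R" for P
    using that genideal_minimal[of P S] genideal_self[OF assms]
    by (auto simp: Spec_def primeideal_def)
  then show ?thesis by (auto simp: compl_V_def basic_open_def)
qed

lemma spa_point_vlt_near_zero:
  assumes I: "ideal I R" and v: "spa_point R I v"
    and x: "x \<in> carrier (adic_completion R I)" "v x = Some \<gamma>"
  obtains m where "\<And>y. y \<in> carrier (adic_completion R I) \<Longrightarrow>
    y m = \<zero>\<^bsub>adic_completion R I\<^esub> m \<Longrightarrow> vlt (v y) (Some \<gamma>)"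
proof -
  let ?C = "adic_completion R I"
  let ?U = "{a \<in> carrier ?C. vlt (v a) (Some \<gamma>)}"
  have "\<gamma> \<in> value_group ?C v"
    using x unfolding value_group_def by blast
  then have "compl_open R I ?U"
    using v by (simp add: spa_point_def)
  moreover have "\<zero>\<^bsub>?C\<^esub> \<in> ?U"
    using compl_map_zero[OF I] ring_hom_closed[OF compl_map_ring_hom[OF I] zero_closed] v
    by (auto simp: spa_point_def valuation_def vlt_def)
  ultimately obtain m where "\<forall>y\<in>carrier ?C. y m = \<zero>\<^bsub>?C\<^esub> m \<longrightarrow> y \<in> ?U"
    unfolding compl_open_def by blast
  then show ?thesis using that by blast
qed

lemma preimage_sigma_basic_open_eq_UN_W_ik:
  assumes f: "f ` {..<n} \<subseteq> carrier R" and I: "I = Idl (f ` {..<n})" and i: "i < n"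
  shows "preimage_sigma R I (basic_open R (f i)) = (\<Union>k. W_ik R I f n i k)"
proof -
  let ?C = "adic_completion R I"
  have ideal: "ideal I R" using f I genideal_ideal by simp
  have fI: "f ` {..<n} \<subseteq> I" using f I genideal_self by simp
  have fi: "f i \<in> carrier R" using f i by auto
  have hom: "compl_map R I \<in> ring_hom R ?C" by (rule compl_map_ring_hom[OF ideal])
  have "v \<in> (\<Union>k. W_ik R I f n i k)"
    if v: "v \<in> Spa R I" and "v (compl_map R I (f i)) \<noteq> None" for v
  proof -
    obtain \<gamma> where \<gamma>: "v (compl_map R I (f i)) = Some \<gamma>"
      using \<open>v (compl_map R I (f i)) \<noteq> None\<close> by blast
    have spa: "spa_point R I v" using v by (simp add: Spa_def)
    obtain m where small: "\<And>y. y \<in> carrier ?C \<Longrightarrow> y m = \<zero>\<^bsub>?C\<^esub> m \<Longrightarrow> vlt (v y) (Some \<gamma>)"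
      using spa_point_vlt_near_zero[OF ideal spa ring_hom_closed[OF hom fi] \<gamma>] by blast
    have "vle (v (compl_map R I (monomial R f n \<alpha>))) (Some \<gamma>)" if "\<alpha> \<in> multi_idx n i m" for \<alpha>
    proof -
      have "monomial R f n \<alpha> \<in> ideal_pow R I m"
        using monomial_mem_ideal_pow[OF ideal fI, of \<alpha>] that by (simp add: multi_idx_def)
      then show ?thesis
        using small[OF ring_hom_closed[OF hom] compl_map_mod_ideal_pow[OF ideal]]
          ideal.Icarr[OF ideal_pow_ideal[OF ideal]]
        by (simp add: vlt_def)
    qed
    then have "v \<in> W_ik R I f n i m"
      using v \<gamma> by (auto simp: W_ik_def rational_subset_def vle_refl)
    then show ?thesis by blast
  qed
  moreover have "W_ik R I f n i k \<subseteq> {v \<in> Spa R I. v (compl_map R I (f i)) \<noteq> None}" for k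
    by (auto simp: W_ik_def rational_subset_def)
  ultimately show ?thesis
    unfolding preimage_sigma_basic_open[OF ideal fi] by blast
qed

end

theorem proposition5p3:
  fixes R :: "('a, 'b) ring_scheme" and f :: "nat \<Rightarrow> 'a" and n :: nat and I :: "'a set"
  assumes "cring R" and "noetherian_ring R"
    and "f ` {..<n} \<subseteq> carrier R" and "I = Idl\<^bsub>R\<^esub> (f ` {..<n})"
  shows "(\<forall>i<n. (preimage_sigma R I (basic_open R (f i))
                    :: ((nat \<Rightarrow> 'a set) \<Rightarrow> 'g::linordered_ab_group_add option) set)
                 = (\<Union>k. W_ik R I f n i k))
       \<and> (preimage_sigma R I (compl_V R I) :: ((nat \<Rightarrow> 'a set) \<Rightarrow> 'g option) set)
           = (\<Union>i<n. preimage_sigma R I (basic_open R (f i)))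
       \<and> (preimage_sigma R I (compl_V R I) :: ((nat \<Rightarrow> 'a set) \<Rightarrow> 'g option) set)
           = (\<Union>i<n. \<Union>k. W_ik R I f n i k)"
proof -
  interpret cring R by fact
  have W_i: "(preimage_sigma R I (basic_open R (f i)) :: ((nat \<Rightarrow> 'a set) \<Rightarrow> 'g option) set)
      = (\<Union>k. W_ik R I f n i k)" if "i < n" for i
    using preimage_sigma_basic_open_eq_UN_W_ik[OF assms(3,4) that] .
  have "compl_V R I = (\<Union>i<n. basic_open R (f i))"
    using compl_V_genideal[OF assms(3)] assms(4) by simp
  then have W: "(preimage_sigma R I (compl_V R I) :: ((nat \<Rightarrow> 'a set) \<Rightarrow> 'g option) set)
      = (\<Union>i<n. preimage_sigma R I (basic_open R (f i)))"
    by (auto simp: preimage_sigma_def)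
  show ?thesis using W_i W by simp
qed

end
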